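(* Let $d_2>0$, $y_\star>0$, $K_P\ge 0$, $K_I>0$ and $u_0\in\mathbb{R}$. Consider the system on $\mathbb{R}^3$ with state $\chi=(\chi_1,\chi_2,\chi_3)=(x_1,x_2,x_c)$ given by $$\dot x_1 = 1 - x_2 u,\qquad \dot x_2 = -d_2 x_2 + x_1 u,\qquad \dot x_c = y_\star - x_2,\qquad u = u_0 + K_I x_c + K_P (y_\star - x_2),$$ i.e. $$\dot\chi=\begin{pmatrix}1-u_0\chi_2-K_I\chi_2\chi_3-K_P\chi_2 y_\star+K_P\chi_2^2\\ -d_2\chi_2+u_0\chi_1+K_I\chi_1\chi_3+K_P\chi_1 y_\star-K_P\chi_1\chi_2\\ -\chi_2+y_\star\end{pmatrix}.$$ Then this closed-loop system has a unique equilibrium point, and this equilibrium is unstable (in the sense of Lyapunov) for all values of $d_2>0$, $y_\star>0$, $K_P\ge 0$, $K_I>0$, $u_0\in\mathbb{R}$.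
   Context: This is the (time- and state-scaled) averaged model of a DC-DC Boost converter with no inductor resistance: $x_1$ is the scaled inductor current, $x_2$ the scaled capacitor (output) voltage, $u$ the duty cycle, $d_2>0$ the scaled load conductance, and the scaled source voltage is $1$. The controller is a PI controller acting on the voltage error $y_\star-x_2$, where $y_\star>0$ is the desired output voltage, $x_c$ is the integrator state, $K_P,K_I$ are the PI gains and $u_0$ is a designer-chosen constant. *)

theory Defs
  imports "HOL-Analysis.Analysis"
begin

definition boost_pi_field ::
  "real \<Rightarrow> real \<Rightarrow> real \<Rightarrow> real \<Rightarrow> real \<Rightarrow> real^3 \<Rightarrow> real^3" where
  "boost_pi_field d2 ystar KP KI u0 chi =
     vector [1 - u0 * chi$2 - KI * chi$2 * chi$3 - KP * chi$2 * ystar + KP * (chi$2)^2,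
             - d2 * chi$2 + u0 * chi$1 + KI * chi$1 * chi$3 + KP * chi$1 * ystar - KP * chi$1 * chi$2,
             - chi$2 + ystar]"

definition equilibrium :: "('a::real_normed_vector \<Rightarrow> 'a) \<Rightarrow> 'a \<Rightarrow> bool" where
  "equilibrium f p \<longleftrightarrow> f p = 0"

definition ode_solution_on ::
  "('a::real_normed_vector \<Rightarrow> 'a) \<Rightarrow> real \<Rightarrow> (real \<Rightarrow> 'a) \<Rightarrow> bool" where
  "ode_solution_on f T x \<longleftrightarrow>
     (\<forall>t\<in>{0..T}. (x has_vector_derivative f (x t)) (at t within {0..T}))"

definition lyapunov_stable :: "('a::real_normed_vector \<Rightarrow> 'a) \<Rightarrow> 'a \<Rightarrow> bool" where
  "lyapunov_stable f p \<longleftrightarrow>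
     (\<forall>\<epsilon>>0. \<exists>\<delta>>0. \<forall>x T. 0 \<le> T \<and> ode_solution_on f T x \<and> dist (x 0) p < \<delta> \<longrightarrow>
        (\<forall>t\<in>{0..T}. dist (x t) p < \<epsilon>))"

end

(* Solving f p = 0 gives the equilibrium p = (d2 ystar^2, ystar, (1/ystar - u0)/KI). Around p the
   field is a linear field J plus the quadratic term (u - u(p)) (-y2, y1, 0). The characteristic
   polynomial of J takes the value -KI < 0 at 0, so J has an eigenvalue mu > 0. A left eigenvector
   gives a coordinate a with a' = mu a to first order, and two further coordinates eta, zeta in
   which the remaining linear dynamics is eta' = -(E + mu) eta - (KI/mu) zeta, zeta' = eta, with
   E = d2 (1 + ystar^2 KP) > 0; hence q = eta^2 + (KI/mu) zeta^2 does not increase to first order.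
   For K large the Chetaev function V = a - K q satisfies V' >= (mu/2) V on {V > 0} near p. As V is
   bounded near p but positive at points arbitrarily close to p, the solutions starting at these
   points leave a fixed ball around p. They exist because the field composed with the retraction
   onto a closed ball is globally Lipschitz. *)

theory Submission
  imports Defs
begin

section \<open>Solutions of Lipschitz vector fields\<close>

lemma ode_solution_on_subset:
  assumes "ode_solution_on f T x" "S \<le> T"
  shows "ode_solution_on f S x"
  unfolding ode_solution_on_def
proof
  fix t assume "t \<in> {0..S}"
  with assms have "(x has_vector_derivative f (x t)) (at t within {0..T})"
    unfolding ode_solution_on_def by auto
  then show "(x has_vector_derivative f (x t)) (at t within {0..S})"
    by (rule has_vector_derivative_within_subset) (use assms(2) in auto)
qed

lemma integral_equation_imp_ode_solution:
  fixes f :: "'a::banach \<Rightarrow> 'a"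
  assumes cont: "continuous_on {0..h} (\<lambda>s. f (x s))"
    and x_eq: "\<And>t. t \<in> {0..h} \<Longrightarrow> x t = x0 + integral {0..t} (\<lambda>s. f (x s))"
  shows "ode_solution_on f h x"
  unfolding ode_solution_on_def
proof
  fix t assume t: "t \<in> {0..h}"
  have "((\<lambda>u. x0 + integral {0..u} (\<lambda>s. f (x s))) has_vector_derivative f (x t)) (at t within {0..h})"
    using has_vector_derivative_add[OF has_vector_derivative_const integral_has_vector_derivative[OF cont t]]
    by simp
  then show "(x has_vector_derivative f (x t)) (at t within {0..h})"
  proof (rule has_vector_derivative_transform[OF t, rotated])
    show "x s = x0 + integral {0..s} (\<lambda>s. f (x s))" if "s \<in> {0..h}" for s
      using x_eq[OF that] .
  qed
qed

text \<open>Clamping the time to \<open>[0, h]\<close> makes the Picard operator act on bounded continuous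
  functions on the whole real line.\<close>

definition picard_step ::
    "('a::banach \<Rightarrow> 'a) \<Rightarrow> 'a \<Rightarrow> real \<Rightarrow> (real \<Rightarrow>\<^sub>C 'a) \<Rightarrow> real \<Rightarrow>\<^sub>C 'a" where
  "picard_step f x0 h \<phi> = Bcontfun (\<lambda>t. x0 + integral {0..max 0 (min h t)} (\<lambda>s. f (\<phi> s)))"

lemma picard_step_apply:
  fixes f :: "'a::banach \<Rightarrow> 'a"
  assumes lip: "L-lipschitz_on UNIV f" and "0 \<le> h"
  shows "picard_step f x0 h \<phi> t = x0 + integral {0..max 0 (min h t)} (\<lambda>s. f (\<phi> s))"
proof -
  define cl where "cl t = max 0 (min h t)" for t :: real
  have cl_in: "cl t \<in> {0..h}" for t using \<open>0 \<le> h\<close> by (auto simp: cl_def)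
  have g_cont: "continuous_on S (\<lambda>s. f (\<phi> s))" for S
    by (rule continuous_on_compose2[OF lipschitz_on_continuous_on[OF lip]]) auto
  have g_bound: "norm (f (\<phi> s)) \<le> norm (f 0) + L * norm \<phi>" for s
  proof -
    have "norm (f (\<phi> s)) \<le> norm (f 0) + L * norm (\<phi> s)"
      using lipschitz_onD[OF lip, of "\<phi> s" 0] norm_triangle_ineq2[of "f (\<phi> s)" "f 0"]
      by (simp add: dist_norm)
    also have "\<dots> \<le> norm (f 0) + L * norm \<phi>"
      using norm_bounded[of \<phi> s] lipschitz_on_nonneg[OF lip] by (simp add: mult_left_mono)
    finally show ?thesis .
  qed
  have "(\<lambda>t. x0 + integral {0..cl t} (\<lambda>s. f (\<phi> s))) \<in> bcontfun"
  proof (rule bcontfun_normI)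
    have I_cont: "continuous_on {0..h} (\<lambda>u. integral {0..u} (\<lambda>s. f (\<phi> s)))"
      unfolding continuous_on_eq_continuous_within
      using integral_has_vector_derivative[OF g_cont] has_vector_derivative_continuous by blast
    have cl_cont: "continuous_on UNIV cl" unfolding cl_def by (intro continuous_intros)
    show "continuous_on UNIV (\<lambda>t. x0 + integral {0..cl t} (\<lambda>s. f (\<phi> s)))"
      by (intro continuous_intros continuous_on_compose2[OF I_cont cl_cont]) (use cl_in in auto)
    fix t
    have "norm (integral {0..cl t} (\<lambda>s. f (\<phi> s))) \<le> (norm (f 0) + L * norm \<phi>) * (cl t - 0)"
      by (rule integral_bound) (use cl_in g_cont g_bound in auto)
    also have "\<dots> \<le> (norm (f 0) + L * norm \<phi>) * h"
      using cl_in[of t] lipschitz_on_nonneg[OF lip] by (intro mult_left_mono) auto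
    finally show "norm (x0 + integral {0..cl t} (\<lambda>s. f (\<phi> s))) \<le> norm x0 + (norm (f 0) + L * norm \<phi>) * h"
      by (meson add_left_mono norm_triangle_ineq order_trans)
  qed
  then show ?thesis unfolding picard_step_def cl_def by (simp add: Bcontfun_inverse)
qed

lemma picard_step_contraction:
  fixes f :: "'a::banach \<Rightarrow> 'a"
  assumes lip: "L-lipschitz_on UNIV f" and "0 \<le> h"
  shows "dist (picard_step f x0 h \<phi>) (picard_step f x0 h \<psi>) \<le> L * h * dist \<phi> \<psi>"
proof (rule dist_bound)
  fix t
  define c where "c = max 0 (min h t)"
  have c: "0 \<le> c" "c \<le> h" using \<open>0 \<le> h\<close> by (auto simp: c_def)
  have g_cont: "continuous_on S (\<lambda>s. f (\<xi> s))" for S and \<xi> :: "real \<Rightarrow>\<^sub>C 'a"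
    by (rule continuous_on_compose2[OF lipschitz_on_continuous_on[OF lip]]) auto
  have "dist (picard_step f x0 h \<phi> t) (picard_step f x0 h \<psi> t)
      = norm (integral {0..c} (\<lambda>s. f (\<phi> s) - f (\<psi> s)))"
    by (simp add: picard_step_apply[OF assms] c_def dist_norm integral_diff
        integrable_continuous_interval g_cont)
  also have "\<dots> \<le> (L * dist \<phi> \<psi>) * (c - 0)"
  proof (rule integral_bound)
    show "continuous_on {0..c} (\<lambda>s. f (\<phi> s) - f (\<psi> s))" by (intro continuous_intros g_cont)
    show "norm (f (\<phi> s) - f (\<psi> s)) \<le> L * dist \<phi> \<psi>" for s
      using lipschitz_onD[OF lip, of "\<phi> s" "\<psi> s"] dist_bounded[of \<phi> s \<psi>] lipschitz_on_nonneg[OF lip]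
      by (simp add: dist_norm order_trans mult_left_mono)
  qed (use c in auto)
  also have "\<dots> \<le> (L * dist \<phi> \<psi>) * h"
    using c lipschitz_on_nonneg[OF lip] by (intro mult_left_mono) auto
  also have "\<dots> = L * h * dist \<phi> \<psi>" by simp
  finally show "dist (picard_step f x0 h \<phi> t) (picard_step f x0 h \<psi> t) \<le> L * h * dist \<phi> \<psi>" .
qed

lemma lipschitz_ode_local_solution_exists:
  fixes f :: "'a::banach \<Rightarrow> 'a"
  assumes lip: "L-lipschitz_on UNIV f" and "0 < L"
  shows "\<exists>x. x 0 = x0 \<and> ode_solution_on f (1 / (2 * L)) x"
proof -
  define h where "h = 1 / (2 * L)"
  have "0 < h" "L * h = 1 / 2" using \<open>0 < L\<close> by (simp_all add: h_def)
  then have "\<forall>\<phi> \<psi>. dist (picard_step f x0 h \<phi>) (picard_step f x0 h \<psi>) \<le> 1/2 * dist \<phi> \<psi>"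
    using picard_step_contraction[OF lip less_imp_le[OF \<open>0 < h\<close>], unfolded \<open>L * h = 1 / 2\<close>] by blast
  then obtain \<phi> where fixp: "picard_step f x0 h \<phi> = \<phi>"
    using banach_fix_type[of "1/2" "picard_step f x0 h"] by auto
  have x_eq: "\<phi> t = x0 + integral {0..t} (\<lambda>s. f (\<phi> s))" if "t \<in> {0..h}" for t
    using picard_step_apply[OF lip, of h x0 \<phi> t] fixp that \<open>0 < h\<close> by simp
  have "continuous_on {0..h} (\<lambda>s. f (\<phi> s))"
    by (rule continuous_on_compose2[OF lipschitz_on_continuous_on[OF lip]]) auto
  then have "ode_solution_on f h \<phi>" using x_eq by (rule integral_equation_imp_ode_solution)
  moreover have "\<phi> 0 = x0" using x_eq[of 0] \<open>0 < h\<close> by simp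
  ultimately show ?thesis unfolding h_def[symmetric] by blast
qed

lemma ode_solution_on_append:
  assumes x: "ode_solution_on f a x" and y: "ode_solution_on f h y"
    and y0: "y 0 = x a" and "0 \<le> a" "0 \<le> h"
  shows "ode_solution_on f (a + h) (\<lambda>t. if t \<in> {0..a} then x t else y (t - a))"
  unfolding ode_solution_on_def
proof
  fix t assume t: "t \<in> {0..a + h}"
  have closures: "closure {0..a} \<inter> closure {a..a + h} = {a}" using assms(4,5) by auto
  have y_shifted: "((\<lambda>t. y (t - a)) has_vector_derivative f (y (s - a))) (at s within {a..a + h})"
    if "s \<in> {a..a + h}" for s
  proof -
    have "((\<lambda>t. t - a) has_vector_derivative 1) (at s within {a..a + h})"
      by (auto intro!: derivative_eq_intros)
    moreover have "(y has_vector_derivative f (y (s - a))) (at (s - a) within (\<lambda>t. t - a) ` {a..a + h})"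
      using y that unfolding ode_solution_on_def by (auto simp: image_minus_const_atLeastAtMost')
    ultimately show ?thesis using vector_diff_chain_within by (force simp: o_def)
  qed
  have "((\<lambda>t. if t \<in> {0..a} then x t else y (t - a)) has_vector_derivative
      (if t \<in> {0..a} then f (x t) else f (y (t - a)))) (at t within {0..a + h})"
  proof (rule has_vector_derivative_If_within_closures)
    show "t \<in> {0..a} \<union> {a..a + h}" "{0..a + h} = {0..a} \<union> {a..a + h}"
      using t assms(4,5) by auto
    show "(x has_vector_derivative f (x t)) (at t within {0..a} \<union> (closure {0..a} \<inter> closure {a..a + h}))"
      if "t \<in> {0..a} \<union> (closure {0..a} \<inter> closure {a..a + h})"
      using that x assms(4) unfolding closures ode_solution_on_def by (auto simp: insert_absorb)
    show "((\<lambda>t. y (t - a)) has_vector_derivative f (y (t - a)))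
        (at t within {a..a + h} \<union> (closure {0..a} \<inter> closure {a..a + h}))"
      if "t \<in> {a..a + h} \<union> (closure {0..a} \<inter> closure {a..a + h})"
      using that y_shifted assms(5) unfolding closures by (auto simp: insert_absorb)
  qed (use y0 closures in auto)
  then show "((\<lambda>t. if t \<in> {0..a} then x t else y (t - a)) has_vector_derivative
      f (if t \<in> {0..a} then x t else y (t - a))) (at t within {0..a + h})"
    by (simp add: if_distrib)
qed

lemma lipschitz_ode_solution_exists:
  fixes f :: "'a::banach \<Rightarrow> 'a"
  assumes lip: "L-lipschitz_on UNIV f" and T: "0 \<le> T"
  shows "\<exists>x. x 0 = x0 \<and> ode_solution_on f T x"
proof -
  define h where "h = 1 / (2 * (L + 1))"
  have L: "0 \<le> L" using lip by (rule lipschitz_on_nonneg)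
  then have h: "0 < h" by (simp add: h_def)
  have step: "\<exists>x. x 0 = z \<and> ode_solution_on f h x" for z
    unfolding h_def using L by (intro lipschitz_ode_local_solution_exists lipschitz_on_mono[OF lip]) auto
  have "\<exists>x. x 0 = z \<and> ode_solution_on f (real n * h) x" for n z
  proof (induction n arbitrary: z)
    case 0
    show ?case
      by (auto simp: ode_solution_on_def has_vector_derivative_def has_derivative_within_singleton_iff
          intro!: bounded_linear_scaleR_left)
  next
    case (Suc n)
    obtain x where "x 0 = z" "ode_solution_on f (real n * h) x" using Suc.IH by blast
    moreover obtain y where "y 0 = x (real n * h)" "ode_solution_on f h y" using step by blast
    ultimately show ?case
      using ode_solution_on_append[of f "real n * h" x h y] h
      by (intro exI[of _ "\<lambda>t. if t \<in> {0..real n * h} then x t else y (t - real n * h)"])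
        (auto simp: algebra_simps)
  qed
  moreover obtain n :: nat where "T / h \<le> real n" using real_arch_simple by blast
  then have "T \<le> real n * h" using h by (simp add: field_simps)
  ultimately show ?thesis by (meson ode_solution_on_subset)
qed

lemma first_hitting_time:
  fixes g :: "real \<Rightarrow> real"
  assumes cont: "continuous_on {0..T} g" and "g 0 < c" and "t \<in> {0..T}" "c \<le> g t"
  obtains t1 where "t1 \<in> {0..T}" "g t1 = c" "\<forall>s\<in>{0..<t1}. g s < c"
proof -
  define Z where "Z = {s \<in> {0..T}. c \<le> g s}"
  have "closed Z" unfolding Z_def
    by (rule continuous_on_closed_Collect_le[OF continuous_on_const cont closed_atLeastAtMost])
  moreover have "Z \<noteq> {}" "bdd_below Z" using assms(3,4) unfolding Z_def by (auto intro: bdd_belowI[of _ 0])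
  ultimately have "Inf Z \<in> Z" by (rule closed_contains_Inf[rotated -1])
  then have Inf_in: "Inf Z \<in> {0..T}" and "c \<le> g (Inf Z)" unfolding Z_def by auto
  have below: "g s < c" if "s \<in> {0..<Inf Z}" for s
    using that Inf_in cInf_lower[of s Z] \<open>bdd_below Z\<close> unfolding Z_def by force
  obtain s where s: "0 \<le> s" "s \<le> Inf Z" "g s = c"
    using IVT'[of g 0 c "Inf Z"] \<open>g 0 < c\<close> \<open>c \<le> g (Inf Z)\<close> Inf_in
      continuous_on_subset[OF cont, of "{0..Inf Z}"] by auto
  with below have "s = Inf Z" by force
  with s Inf_in below show thesis by (intro that) auto
qed

lemma lipschitz_on_comp_closest_point_cball:
  fixes f :: "'a::euclidean_space \<Rightarrow> 'b::metric_space"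
  assumes lip: "L-lipschitz_on (cball p r) f" and "0 \<le> r"
  shows "L-lipschitz_on UNIV (f \<circ> closest_point (cball p r))"
proof -
  have cball_ne: "cball p r \<noteq> {}" using \<open>0 \<le> r\<close> by simp
  have "1-lipschitz_on UNIV (closest_point (cball p r))"
    using closest_point_lipschitz[OF convex_cball closed_cball cball_ne] by (intro lipschitz_onI) auto
  moreover have "L-lipschitz_on (closest_point (cball p r) ` UNIV) f"
    using closest_point_in_set[OF closed_cball cball_ne] by (intro lipschitz_on_subset[OF lip]) auto
  ultimately show ?thesis using lipschitz_on_compose by fastforce
qed

lemma ode_solution_until_exit_cball:
  fixes f :: "'a::euclidean_space \<Rightarrow> 'a"
  assumes lip: "L-lipschitz_on (cball p r) f" and x0: "dist x0 p < r" and T: "0 \<le> T"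
  obtains x t1 where "x 0 = x0" "t1 \<in> {0..T}" "ode_solution_on f t1 x"
    "\<forall>t\<in>{0..t1}. dist (x t) p \<le> r" "t1 = T \<or> dist (x t1) p = r"
proof -
  \<comment> \<open>The field composed with the nearest-point retraction onto the ball is globally Lipschitz,
    and its solutions solve the original field until they leave the ball.\<close>
  define R where "R = closest_point (cball p r)"
  have "0 \<le> r" using x0 zero_le_dist[of x0 p] by linarith
  have R_id: "R y = y" if "dist y p \<le> r" for y
    unfolding R_def using that by (intro closest_point_self) (simp add: dist_commute)
  obtain x where x0_eq: "x 0 = x0" and sol: "ode_solution_on (f \<circ> R) T x"
    using lipschitz_ode_solution_exists[OF lipschitz_on_comp_closest_point_cball[OF lip \<open>0 \<le> r\<close>] T]
    unfolding R_def by blast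
  have x_cont: "continuous_on {0..T} x"
    using sol unfolding ode_solution_on_def continuous_on_eq_continuous_within
    by (blast intro: has_vector_derivative_continuous)
  have true_solution: "ode_solution_on f t1 x"
    if "t1 \<le> T" "\<forall>t\<in>{0..t1}. dist (x t) p \<le> r" for t1
    using ode_solution_on_subset[OF sol that(1)] that(2) R_id unfolding ode_solution_on_def by simp
  show thesis
  proof (cases "\<exists>t\<in>{0..T}. r \<le> dist (x t) p")
    case True
    then obtain t where "t \<in> {0..T}" "r \<le> dist (x t) p" by blast
    moreover have "continuous_on {0..T} (\<lambda>t. dist (x t) p)" by (intro continuous_intros x_cont)
    ultimately obtain t1 where "t1 \<in> {0..T}" "dist (x t1) p = r" "\<forall>s\<in>{0..<t1}. dist (x s) p < r"
      using first_hitting_time[of T "\<lambda>t. dist (x t) p" r] x0 x0_eq by auto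
    moreover from this have "\<forall>t\<in>{0..t1}. dist (x t) p \<le> r"
      by (metis atLeastAtMost_iff atLeastLessThan_iff less_eq_real_def order_refl)
    ultimately show thesis using true_solution x0_eq by (intro that) auto
  next
    case False
    then have "\<forall>t\<in>{0..T}. dist (x t) p \<le> r" by auto
    then show thesis using true_solution x0_eq T by (intro that[of x T]) auto
  qed
qed

lemma ode_solution_comp_has_real_derivative:
  fixes V :: "'a::real_normed_vector \<Rightarrow> real"
  assumes "ode_solution_on f T x" "t \<in> {0..T}" "(V has_derivative V') (at (x t))"
  shows "((\<lambda>t. V (x t)) has_real_derivative V' (f (x t))) (at t within {0..T})"
proof -
  have "(x has_vector_derivative f (x t)) (at t within {0..T})"
    using assms(1,2) unfolding ode_solution_on_def by blast
  moreover have "(V has_derivative V') (at (x t) within x ` {0..T})"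
    using assms(3) by (rule has_derivative_at_withinI)
  ultimately show ?thesis
    unfolding has_real_derivative_iff_has_vector_derivative
    using vector_derivative_diff_chain_within by (fastforce simp: o_def)
qed

section \<open>Chetaev's instability theorem\<close>

lemma differential_inequality_linear_growth:
  fixes g g' :: "real \<Rightarrow> real"
  assumes cont: "continuous_on {0..T} g"
    and deriv: "\<And>t. 0 < t \<Longrightarrow> t < T \<Longrightarrow> (g has_real_derivative g' t) (at t)"
    and ineq: "\<And>t. 0 < t \<Longrightarrow> t < T \<Longrightarrow> 0 < g t \<Longrightarrow> \<kappa> * g t \<le> g' t"
    and "0 \<le> T" "0 \<le> \<kappa>" "0 < g 0"
  shows "g 0 / 2 * (1 + \<kappa> * T) < g T"
proof (rule ccontr)
  assume contra: "\<not> ?thesis"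
  \<comment> \<open>Half of the linear bound, so that the comparison is strict at \<open>t = 0\<close>.\<close>
  define \<psi> where "\<psi> t = g t - g 0 / 2 * (1 + \<kappa> * t)" for t
  have \<psi>_cont: "continuous_on {0..T} (\<lambda>t. - \<psi> t)"
    unfolding \<psi>_def by (intro continuous_intros cont)
  have "- \<psi> 0 < 0" "T \<in> {0..T}" "0 \<le> - \<psi> T" using contra assms(4,6) by (auto simp: \<psi>_def)
  then obtain t1 where t1: "t1 \<in> {0..T}" "- \<psi> t1 = 0" and neg: "\<forall>s\<in>{0..<t1}. - \<psi> s < 0"
    by (rule first_hitting_time[OF \<psi>_cont])
  have "\<psi> 0 \<le> \<psi> t1"
  proof (rule DERIV_nonneg_imp_increasing_open[of 0 t1 \<psi>])
    fix t assume t: "0 < t" "t < t1"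
    have "g 0 / 2 \<le> g 0 / 2 * (1 + \<kappa> * t)" using t assms(5,6) by simp
    also have "\<dots> < g t" using neg t by (simp add: \<psi>_def)
    finally have "g 0 / 2 < g t" .
    then have "\<kappa> * (g 0 / 2) \<le> \<kappa> * g t" using assms(5) by (intro mult_left_mono) auto
    also have "\<dots> \<le> g' t" using ineq[of t] t t1(1) \<open>g 0 / 2 < g t\<close> assms(6) by simp
    finally have "\<kappa> * (g 0 / 2) \<le> g' t" .
    moreover have "(\<psi> has_real_derivative g' t - g 0 / 2 * \<kappa>) (at t)"
      unfolding \<psi>_def[abs_def] using t t1(1)
      by (auto intro!: derivative_eq_intros deriv)
    ultimately show "\<exists>y. (\<psi> has_real_derivative y) (at t) \<and> 0 \<le> y"
      by (intro exI[of _ "g' t - g 0 / 2 * \<kappa>"]) (simp add: algebra_simps)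
  next
    show "continuous_on {0..t1} \<psi>"
      using continuous_on_minus[OF \<psi>_cont] t1 by (auto elim: continuous_on_subset)
  qed (use t1 in auto)
  then show False using t1(2) assms(6) by (simp add: \<psi>_def)
qed

lemma chetaev_instability:
  fixes f :: "'a::euclidean_space \<Rightarrow> 'a" and V :: "'a \<Rightarrow> real"
  assumes lip: "L-lipschitz_on (cball p r) f"
    and V_deriv: "\<And>x. x \<in> ball p r \<Longrightarrow> (V has_derivative V' x) (at x)"
    and V_growth: "\<And>x. x \<in> ball p r \<Longrightarrow> 0 < V x \<Longrightarrow> \<kappa> * V x \<le> V' x (f x)"
    and V_bounded: "\<And>x. x \<in> ball p r \<Longrightarrow> V x \<le> \<beta>"
    and V_pos_near: "\<And>\<delta>. 0 < \<delta> \<Longrightarrow> \<exists>x\<in>ball p \<delta>. 0 < V x"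
    and "0 < r" "0 < \<kappa>"
  shows "\<not> lyapunov_stable f p"
proof
  assume "lyapunov_stable f p"
  then obtain \<delta> where "0 < \<delta>" and stable: "\<And>x T. 0 \<le> T \<Longrightarrow> ode_solution_on f T x \<Longrightarrow>
      dist (x 0) p < \<delta> \<Longrightarrow> \<forall>t\<in>{0..T}. dist (x t) p < r"
    using \<open>0 < r\<close> unfolding lyapunov_stable_def by meson
  obtain x0 where "x0 \<in> ball p (min \<delta> r)" and V_x0: "0 < V x0"
    using V_pos_near[of "min \<delta> r"] \<open>0 < \<delta>\<close> \<open>0 < r\<close> by auto
  then have x0: "dist x0 p < \<delta>" "dist x0 p < r" "x0 \<in> ball p r" by (auto simp: dist_commute)
  define T where "T = 2 * \<beta> / (\<kappa> * V x0)"
  have "0 < \<beta>" using V_bounded[OF x0(3)] V_x0 by linarith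
  then have "0 \<le> T" using \<open>0 < \<kappa>\<close> V_x0 by (simp add: T_def)
  obtain x t1 where x0_eq: "x 0 = x0" and t1: "t1 \<in> {0..T}" and sol: "ode_solution_on f t1 x"
    and exit: "t1 = T \<or> dist (x t1) p = r"
    by (rule ode_solution_until_exit_cball[OF lip x0(2) \<open>0 \<le> T\<close>])
  have inside: "\<forall>t\<in>{0..t1}. dist (x t) p < r"
    using stable[OF _ sol] t1 x0_eq x0(1) by simp
  with exit t1 have "t1 = T" by auto
  with sol inside have sol: "ode_solution_on f T x" and in_ball: "\<And>t. t \<in> {0..T} \<Longrightarrow> x t \<in> ball p r"
    by (auto simp: dist_commute)
  have V_x_deriv: "((\<lambda>t. V (x t)) has_real_derivative V' (x t) (f (x t))) (at t within {0..T})"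
    if "t \<in> {0..T}" for t
    using sol that V_deriv[OF in_ball[OF that]] by (rule ode_solution_comp_has_real_derivative)
  have "V x0 / 2 * (1 + \<kappa> * T) < V (x T)"
  proof (rule differential_inequality_linear_growth[where g = "\<lambda>t. V (x t)", simplified x0_eq])
    show "continuous_on {0..T} (\<lambda>t. V (x t))"
      unfolding continuous_on_eq_continuous_within using V_x_deriv by (blast intro: DERIV_continuous)
    show "((\<lambda>t. V (x t)) has_real_derivative V' (x t) (f (x t))) (at t)" if "0 < t" "t < T" for t
      using V_x_deriv[of t] that at_within_Icc_at[OF that] by simp
    show "\<kappa> * V (x t) \<le> V' (x t) (f (x t))" if "0 < t" "t < T" "0 < V (x t)" for t
      using V_growth in_ball that by simp
  qed (use \<open>0 \<le> T\<close> \<open>0 < \<kappa>\<close> V_x0 in auto)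
  moreover have "V x0 / 2 * (1 + \<kappa> * T) = V x0 / 2 + \<beta>"
    using \<open>0 < \<kappa>\<close> V_x0 by (simp add: T_def field_simps)
  ultimately show False using V_bounded[OF in_ball, of T] \<open>0 \<le> T\<close> V_x0 by simp
qed

lemma lipschitz_on_cball_linear_plus_bilinear:
  fixes J :: "'a::real_normed_vector \<Rightarrow> 'b::real_normed_vector"
  assumes J: "bounded_linear J" and B: "bounded_bilinear B"
  shows "\<exists>L. L-lipschitz_on (cball p r) (\<lambda>x. J (x - p) + B (x - p) (x - p))"
proof -
  obtain KJ where KJ: "0 \<le> KJ" "\<And>y. norm (J y) \<le> norm y * KJ"
    using bounded_linear.nonneg_bounded[OF J] by blast
  obtain KB where KB: "0 \<le> KB" "\<And>y z. norm (B y z) \<le> norm y * norm z * KB"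
    using bounded_bilinear.nonneg_bounded[OF B] by blast
  have "(KJ + 2 * \<bar>r\<bar> * KB)-lipschitz_on (cball p r) (\<lambda>x. J (x - p) + B (x - p) (x - p))"
  proof (rule lipschitz_onI)
    fix x x' assume "x \<in> cball p r" "x' \<in> cball p r"
    then have y: "norm (x - p) \<le> \<bar>r\<bar>" "norm (x' - p) \<le> \<bar>r\<bar>"
      by (auto simp: dist_norm norm_minus_commute)
    define d where "d = x - x'"
    have "d = (x - p) - (x' - p)" by (simp add: d_def)
    then have "J (x - p) + B (x - p) (x - p) - (J (x' - p) + B (x' - p) (x' - p))
        = J d + B (x - p) d + B d (x' - p)"
      by (simp only: linear_diff[OF bounded_linear.linear[OF J]] bounded_bilinear.diff_left[OF B]
          bounded_bilinear.diff_right[OF B]) (simp add: algebra_simps)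
    also have "norm \<dots> \<le> norm d * KJ + norm (x - p) * norm d * KB + norm d * norm (x' - p) * KB"
      using KJ(2) KB(2) by (intro norm_triangle_le add_mono) auto
    also have "\<dots> \<le> norm d * KJ + \<bar>r\<bar> * norm d * KB + norm d * \<bar>r\<bar> * KB"
      using y KB(1) by (intro add_mono mult_right_mono mult_left_mono) auto
    finally show "dist (J (x - p) + B (x - p) (x - p)) (J (x' - p) + B (x' - p) (x' - p))
        \<le> (KJ + 2 * \<bar>r\<bar> * KB) * dist x x'"
      by (simp add: dist_norm d_def algebra_simps)
  qed (use KJ KB in simp)
  then show ?thesis ..
qed

text \<open>The ingredients of a Chetaev function at an equilibrium \<open>p\<close> of a linear-plus-quadratic field:
  \<open>a\<close> is a left eigenvector of the linear part for an unstable eigenvalue, and \<open>q\<close> is a form for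
  the remaining modes that does not increase along the linear flow.\<close>

locale unstable_linearization =
  fixes f J :: "'a::euclidean_space \<Rightarrow> 'a" and B :: "'a \<Rightarrow> 'a \<Rightarrow> 'a" and p :: 'a
    and a q :: "'a \<Rightarrow> real" and q' :: "'a \<Rightarrow> 'a \<Rightarrow> real" and w :: 'a and \<mu> C m :: real
  assumes field_expansion: "\<And>y. f (p + y) = J y + B y y"
    and linear_part: "bounded_linear J" and quadratic_part: "bounded_bilinear B"
    and a_linear: "bounded_linear a" and a_eigen: "\<And>y. a (J y) = \<mu> * a y" and \<mu>_pos: "0 < \<mu>"
    and a_nonzero: "a w \<noteq> 0"
    and q_deriv: "\<And>y. (q has_derivative q' y) (at y)"
    and q_decreasing: "\<And>y. q' y (J y) \<le> 0"
    and q'_bound: "\<And>y h. \<bar>q' y h\<bar> \<le> C * norm y * norm h"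
    and q_nonneg: "\<And>y. 0 \<le> q y" and q_bound: "\<And>y. q y \<le> C * (norm y)\<^sup>2"
    and m_pos: "0 < m" and coercive: "\<And>y. m * (norm y)\<^sup>2 \<le> (a y)\<^sup>2 + q y"
begin

definition chetaev_function :: "real \<Rightarrow> 'a \<Rightarrow> real" where
  "chetaev_function K x = a (x - p) - K * q (x - p)"

lemma chetaev_function_has_derivative:
  "(chetaev_function K has_derivative (\<lambda>h. a h - K * q' (x - p) h)) (at x)"
  unfolding chetaev_function_def[abs_def]
  by (rule derivative_eq_intros bounded_linear.has_derivative[OF a_linear]
      has_derivative_compose[OF _ q_deriv] | simp)+

lemma C_nonneg: "0 \<le> C"
proof -
  have "w \<noteq> 0" using a_nonzero linear_0[OF bounded_linear.linear[OF a_linear]] by auto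
  then have "0 < (norm w)\<^sup>2" by simp
  moreover have "0 \<le> C * (norm w)\<^sup>2" using q_nonneg[of w] q_bound[of w] by linarith
  ultimately show ?thesis by (simp add: zero_le_mult_iff)
qed

lemma chetaev_derivative_lower_bound:
  assumes A: "0 \<le> A" "\<And>y. \<bar>a y\<bar> \<le> norm y * A"
    and KB: "0 \<le> KB" "\<And>y z. norm (B y z) \<le> norm y * norm z * KB" and "0 < K"
  shows "\<mu> * a y - KB * (norm y)\<^sup>2 * (A + K * C * norm y) \<le> a (f (p + y)) - K * q' y (f (p + y))"
proof -
  let ?N = "norm y"
  have B_le: "norm (B y y) \<le> ?N\<^sup>2 * KB" using KB(2)[of y y] by (simp add: power2_eq_square)
  have "\<bar>a (B y y)\<bar> \<le> ?N\<^sup>2 * KB * A"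
    using A(2)[of "B y y"] B_le A(1) by (meson mult_right_mono order_trans)
  moreover have "\<bar>q' y (B y y)\<bar> \<le> C * ?N * (?N\<^sup>2 * KB)"
    using q'_bound[of y "B y y"] B_le C_nonneg by (meson mult_left_mono mult_nonneg_nonneg norm_ge_zero order_trans)
  then have "K * q' y (B y y) \<le> K * (C * ?N * (?N\<^sup>2 * KB))"
    using \<open>0 < K\<close> by (simp add: abs_le_iff)
  moreover have "K * q' y (J y) \<le> 0" using q_decreasing[of y] \<open>0 < K\<close> by (simp add: mult_nonneg_nonpos)
  moreover have "a (f (p + y)) - K * q' y (f (p + y)) = \<mu> * a y + a (B y y) - K * q' y (J y) - K * q' y (B y y)"
    unfolding field_expansion
    using a_eigen linear_add[OF bounded_linear.linear[OF a_linear]]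
      linear_add[OF has_derivative_linear[OF q_deriv]] by (simp add: algebra_simps)
  moreover have "KB * ?N\<^sup>2 * (A + K * C * ?N) = ?N\<^sup>2 * KB * A + K * (C * ?N * (?N\<^sup>2 * KB))"
    by (simp add: algebra_simps)
  ultimately show ?thesis by (simp add: abs_le_iff)
qed

lemma chetaev_region_norm_bound:
  assumes A: "\<And>y. \<bar>a y\<bar> \<le> norm y * A" and "0 < K" and "K * q y < a y"
  shows "m * (norm y)\<^sup>2 \<le> a y * (A * norm y + 1 / K)"
proof -
  have "0 < a y" using assms(2,3) q_nonneg[of y] by (smt (verit) mult_nonneg_nonneg)
  have "m * (norm y)\<^sup>2 \<le> (a y)\<^sup>2 + q y" by (rule coercive)
  also have "(a y)\<^sup>2 \<le> a y * (A * norm y)"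
    using A[of y] \<open>0 < a y\<close> by (simp add: power2_eq_square mult_left_mono mult.commute)
  also have "q y \<le> a y / K" using assms(2,3) by (simp add: field_simps)
  finally show ?thesis by (simp add: algebra_simps)
qed

lemma chetaev_function_growth:
  obtains K \<rho> where "0 < K" "0 < \<rho>"
    "\<And>x. x \<in> ball p \<rho> \<Longrightarrow> 0 < chetaev_function K x \<Longrightarrow>
      \<mu> / 2 * chetaev_function K x \<le> a (f x) - K * q' (x - p) (f x)"
proof -
  obtain A where A: "0 \<le> A" "\<And>y. \<bar>a y\<bar> \<le> norm y * A"
    using bounded_linear.nonneg_bounded[OF a_linear] by auto
  obtain KB where KB: "0 \<le> KB" "\<And>y z. norm (B y z) \<le> norm y * norm z * KB"
    using bounded_bilinear.nonneg_bounded[OF quadratic_part] by blast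
  \<comment> \<open>Where \<open>chetaev_function K\<close> is positive, the quadratic terms lower its derivative by at most
    \<open>a (x - p) * gain (norm (x - p))\<close>. \<open>K\<close> makes \<open>gain 0 \<le> \<mu> / 4\<close>; \<open>\<rho>\<close> comes from continuity.\<close>
  define K where "K = 4 * KB * A / (m * \<mu>) + 1"
  have K: "0 < K" using A(1) KB(1) m_pos \<mu>_pos by (simp add: K_def add_nonneg_pos)
  define gain where "gain N = KB * (A * N + 1 / K) * (A + K * C * N) / m" for N
  have "\<mu> * (K * m) = 4 * KB * A + \<mu> * m" using m_pos \<mu>_pos by (simp add: K_def field_simps)
  then have "gain 0 \<le> \<mu> / 4" using K m_pos \<mu>_pos by (simp add: gain_def pos_divide_le_eq)
  then have "gain 0 < \<mu> / 2" using \<mu>_pos by simp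
  moreover have "isCont gain 0" unfolding gain_def using m_pos by (intro continuous_intros) auto
  ultimately obtain \<rho> where "0 < \<rho>"
    and gain_close: "\<And>N. dist N 0 < \<rho> \<Longrightarrow> dist (gain N) (gain 0) < \<mu> / 2 - gain 0"
    unfolding continuous_at_eps_delta by (meson diff_gt_0_iff_gt)
  show thesis
  proof (rule that[OF K \<open>0 < \<rho>\<close>])
    fix x assume x: "x \<in> ball p \<rho>" and pos: "0 < chetaev_function K x"
    define y where "y = x - p"
    then have x_eq: "x = p + y" by simp
    have "gain (norm y) < \<mu> / 2"
      using gain_close[of "norm y"] x by (simp add: y_def dist_real_def dist_norm norm_minus_commute)
    have Kq_less: "K * q y < a y" using pos by (simp add: chetaev_function_def y_def)
    then have "0 < a y" using q_nonneg[of y] K by (smt (verit) mult_nonneg_nonneg)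
    have "KB * (norm y)\<^sup>2 * (A + K * C * norm y)
        \<le> KB * (a y * (A * norm y + 1 / K) / m) * (A + K * C * norm y)"
      using chetaev_region_norm_bound[OF A(2) K Kq_less] m_pos KB(1) A(1) K C_nonneg
      by (intro mult_right_mono mult_left_mono) (simp_all add: field_simps)
    also have "\<dots> = a y * gain (norm y)" by (simp add: gain_def)
    also have "\<dots> \<le> \<mu> / 2 * a y"
      using \<open>gain (norm y) < \<mu> / 2\<close> \<open>0 < a y\<close> by simp
    finally have "\<mu> / 2 * a y \<le> a (f x) - K * q' y (f x)"
      using chetaev_derivative_lower_bound[OF A KB K, of y] unfolding x_eq by linarith
    moreover have "chetaev_function K x \<le> a y"
      using K q_nonneg[of y] by (simp add: chetaev_function_def y_def)
    ultimately show "\<mu> / 2 * chetaev_function K x \<le> a (f x) - K * q' (x - p) (f x)"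
      unfolding y_def[symmetric] using \<mu>_pos mult_left_mono[of "chetaev_function K x" "a y" "\<mu> / 2"]
      by linarith
  qed
qed

lemma chetaev_function_positive_near:
  assumes "0 < \<delta>"
  shows "\<exists>x\<in>ball p \<delta>. 0 < chetaev_function K x"
proof -
  define v where "v = (1 / a w) *\<^sub>R w"
  have a_v: "a v = 1"
    using a_nonzero by (simp add: v_def linear_scale[OF bounded_linear.linear[OF a_linear]])
  define c where "c = \<bar>K\<bar> * C * (norm v)\<^sup>2 + norm v + 1"
  have c: "0 < c" using C_nonneg by (simp add: c_def add_nonneg_pos)
  define s where "s = min \<delta> 1 / (2 * c)"
  have s: "0 < s" "s * c < \<delta>" "s * c < 1" using c assms by (auto simp: s_def)
  have "0 \<le> \<bar>K\<bar> * C * (norm v)\<^sup>2" using C_nonneg by simp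
  then have "norm v \<le> c" "\<bar>K\<bar> * C * (norm v)\<^sup>2 \<le> c" by (simp_all add: c_def)
  then have le_sc: "s * norm v \<le> s * c" "s * (\<bar>K\<bar> * C * (norm v)\<^sup>2) \<le> s * c"
    using s(1) by (simp_all add: mult_left_mono)
  then have "s * norm v < \<delta>" using s(2) by linarith
  then have "p + s *\<^sub>R v \<in> ball p \<delta>" using s(1) by (simp add: dist_norm)
  moreover have "0 < chetaev_function K (p + s *\<^sub>R v)"
  proof -
    have "K * q (s *\<^sub>R v) \<le> \<bar>K\<bar> * q (s *\<^sub>R v)"
      using q_nonneg by (intro mult_right_mono) auto
    also have "\<dots> \<le> \<bar>K\<bar> * (C * (s * norm v)\<^sup>2)"
      using q_bound[of "s *\<^sub>R v"] s(1) by (intro mult_left_mono) auto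
    also have "\<dots> = s * (s * (\<bar>K\<bar> * C * (norm v)\<^sup>2))" by (simp add: power2_eq_square algebra_simps)
    also have "\<dots> < s * 1"
      using le_sc(2) s(1,3) by (intro mult_strict_left_mono) linarith+
    finally show ?thesis
      using a_v by (simp add: chetaev_function_def linear_scale[OF bounded_linear.linear[OF a_linear]])
  qed
  ultimately show ?thesis ..
qed

theorem unstable: "\<not> lyapunov_stable f p"
proof -
  obtain K \<rho> where "0 < \<rho>" and growth: "\<And>x. x \<in> ball p \<rho> \<Longrightarrow> 0 < chetaev_function K x \<Longrightarrow>
      \<mu> / 2 * chetaev_function K x \<le> a (f x) - K * q' (x - p) (f x)" and "0 < K"
    using chetaev_function_growth by blast
  have "f = (\<lambda>x. J (x - p) + B (x - p) (x - p))"
    using field_expansion[of "x - p" for x] by (auto simp: fun_eq_iff)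
  then obtain L where lip: "L-lipschitz_on (cball p \<rho>) f"
    using lipschitz_on_cball_linear_plus_bilinear[OF linear_part quadratic_part] by metis
  obtain A where A: "\<And>y. \<bar>a y\<bar> \<le> norm y * A"
    using bounded_linear.nonneg_bounded[OF a_linear] by auto
  have bounded: "chetaev_function K x \<le> \<rho> * \<bar>A\<bar>" if "x \<in> ball p \<rho>" for x
  proof -
    have "0 \<le> K * q (x - p)" using q_nonneg[of "x - p"] \<open>0 < K\<close> by simp
    then have "chetaev_function K x \<le> \<bar>a (x - p)\<bar>"
      unfolding chetaev_function_def using abs_ge_self[of "a (x - p)"] by linarith
    also have "\<dots> \<le> norm (x - p) * \<bar>A\<bar>"
      using A[of "x - p"] by (meson abs_ge_self order_trans mult_left_mono norm_ge_zero)
    also have "\<dots> \<le> \<rho> * \<bar>A\<bar>"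
      using that by (intro mult_right_mono) (auto simp: dist_norm norm_minus_commute)
    finally show ?thesis .
  qed
  show ?thesis
    by (rule chetaev_instability[OF lip chetaev_function_has_derivative growth bounded
          chetaev_function_positive_near \<open>0 < \<rho>\<close>]) (use \<mu>_pos in auto)
qed

end

section \<open>The boost converter with PI control\<close>

lemma boost_pi_field_nth:
  "boost_pi_field d2 ystar KP KI u0 x $ 1
     = 1 - u0 * x$2 - KI * x$2 * x$3 - KP * x$2 * ystar + KP * (x$2)\<^sup>2"
  "boost_pi_field d2 ystar KP KI u0 x $ 2
     = - d2 * x$2 + u0 * x$1 + KI * x$1 * x$3 + KP * x$1 * ystar - KP * x$1 * x$2"
  "boost_pi_field d2 ystar KP KI u0 x $ 3 = - x$2 + ystar"
  unfolding boost_pi_field_def by simp_all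

definition boost_pi_equilibrium :: "real \<Rightarrow> real \<Rightarrow> real \<Rightarrow> real \<Rightarrow> real^3" where
  "boost_pi_equilibrium d2 ystar KI u0 = vector [d2 * ystar\<^sup>2, ystar, (1 / ystar - u0) / KI]"

lemma boost_pi_equilibrium_iff:
  assumes "ystar \<noteq> 0" "KI \<noteq> 0"
  shows "equilibrium (boost_pi_field d2 ystar KP KI u0) p \<longleftrightarrow> p = boost_pi_equilibrium d2 ystar KI u0"
proof -
  let ?u = "u0 + KI * p$3"
  have "equilibrium (boost_pi_field d2 ystar KP KI u0) p \<longleftrightarrow>
      p$2 = ystar \<and> ystar * ?u = 1 \<and> p$1 * ?u = d2 * ystar"
    unfolding equilibrium_def vec_eq_iff forall_3 boost_pi_field_nth
    by (auto simp: algebra_simps power2_eq_square)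
  also have "\<dots> \<longleftrightarrow> p$2 = ystar \<and> ?u = 1 / ystar \<and> p$1 = d2 * ystar\<^sup>2"
  proof -
    have "ystar * u = 1 \<and> x * u = d2 * ystar \<longleftrightarrow> u = 1 / ystar \<and> x = d2 * ystar\<^sup>2" for u x
    proof
      assume "ystar * u = 1 \<and> x * u = d2 * ystar"
      moreover from this have "x = x * u * ystar" by (metis mult.assoc mult.commute mult_1_right)
      ultimately show "u = 1 / ystar \<and> x = d2 * ystar\<^sup>2"
        using assms(1) by (simp add: field_simps power2_eq_square)
    qed (use assms(1) in \<open>simp add: power2_eq_square\<close>)
    then show ?thesis by blast
  qed
  also have "\<dots> \<longleftrightarrow> p = boost_pi_equilibrium d2 ystar KI u0"
    unfolding boost_pi_equilibrium_def vec_eq_iff forall_3 using assms by (auto simp: field_simps)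
  finally show ?thesis .
qed

definition boost_pi_linearization :: "real \<Rightarrow> real \<Rightarrow> real \<Rightarrow> real \<Rightarrow> real^3 \<Rightarrow> real^3" where
  "boost_pi_linearization d2 ystar KP KI y = vector [
     (ystar * KP - 1 / ystar) * y$2 - ystar * KI * y$3,
     y$1 / ystar - d2 * (1 + ystar\<^sup>2 * KP) * y$2 + d2 * ystar\<^sup>2 * KI * y$3,
     - y$2]"

text \<open>The duty cycle enters the converter only through the lossless term \<open>u * (- x\<^sub>2, x\<^sub>1, 0)\<close>,
  so around the equilibrium the field is its linearization plus the quadratic term
  \<open>(u - u\<^sub>*) * rot12 y\<close>, with \<open>rot12\<close> the quarter turn in the \<open>(x\<^sub>1, x\<^sub>2)\<close>-plane.\<close>

definition rot12 :: "real^3 \<Rightarrow> real^3" where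
  "rot12 y = vector [- y$2, y$1, 0]"

lemma boost_pi_field_expansion:
  assumes "ystar \<noteq> 0" "KI \<noteq> 0"
  shows "boost_pi_field d2 ystar KP KI u0 (boost_pi_equilibrium d2 ystar KI u0 + y)
    = boost_pi_linearization d2 ystar KP KI y + (KI * y$3 - KP * y$2) *\<^sub>R rot12 y"
  unfolding vec_eq_iff forall_3 boost_pi_field_nth
  using assms by (simp add: boost_pi_equilibrium_def boost_pi_linearization_def rot12_def
      field_simps power2_eq_square)

lemma bounded_linear_boost_pi_linearization: "bounded_linear (boost_pi_linearization d2 ystar KP KI)"
  unfolding linear_conv_bounded_linear[symmetric]
  by (rule linearI) (simp_all add: vec_eq_iff forall_3 boost_pi_linearization_def algebra_simps
      add_divide_distrib)

lemma bounded_linear_rot12: "bounded_linear rot12"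
  unfolding linear_conv_bounded_linear[symmetric]
  by (rule linearI) (simp_all add: vec_eq_iff forall_3 rot12_def)

lemma inner_vector_3: "vector [a1, a2, a3] \<bullet> (y :: real^3) = a1 * y$1 + a2 * y$2 + a3 * y$3"
  by (simp add: inner_vec_def sum_3)

lemma boost_pi_linearization_nth:
  "boost_pi_linearization d2 ystar KP KI y $ 1 = (ystar * KP - 1 / ystar) * y$2 - ystar * KI * y$3"
  "boost_pi_linearization d2 ystar KP KI y $ 2
     = y$1 / ystar - d2 * (1 + ystar\<^sup>2 * KP) * y$2 + d2 * ystar\<^sup>2 * KI * y$3"
  "boost_pi_linearization d2 ystar KP KI y $ 3 = - y$2"
  by (simp_all add: boost_pi_linearization_def)

lemma abs_inner_mult_le: "\<bar>(w \<bullet> y) * (w \<bullet> h)\<bar> \<le> (norm w)\<^sup>2 * (norm y * norm h)"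
proof -
  have "\<bar>w \<bullet> y\<bar> * \<bar>w \<bullet> h\<bar> \<le> (norm w * norm y) * (norm w * norm h)"
    by (intro mult_mono Cauchy_Schwarz_ineq2) auto
  then show ?thesis by (simp add: abs_mult power2_eq_square algebra_simps)
qed

text \<open>The characteristic polynomial \<open>det (s I - J)\<close> of the linearization \<open>J\<close>.\<close>

definition boost_pi_char_poly :: "real \<Rightarrow> real \<Rightarrow> real \<Rightarrow> real \<Rightarrow> real \<Rightarrow> real" where
  "boost_pi_char_poly d2 ystar KP KI s =
     s^3 + d2 * (1 + ystar\<^sup>2 * KP) * s\<^sup>2 + (d2 * ystar\<^sup>2 * KI - KP + 1 / ystar\<^sup>2) * s - KI"

lemma boost_pi_char_poly_positive_root:
  assumes "0 \<le> d2" "0 \<le> KP" "0 < KI"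
  obtains \<mu> where "0 < \<mu>" "boost_pi_char_poly d2 ystar KP KI \<mu> = 0"
proof -
  let ?P = "boost_pi_char_poly d2 ystar KP KI"
  define R where "R = 1 + KI + KP"
  have R: "1 \<le> R" using assms by (simp add: R_def)
  have "R\<^sup>2 - KP * R - KI \<le> ?P R"
  proof -
    have "R\<^sup>2 \<le> R^3" using R by (simp add: power_increasing)
    moreover have "0 \<le> d2 * (1 + ystar\<^sup>2 * KP) * R\<^sup>2 + (d2 * ystar\<^sup>2 * KI + 1 / ystar\<^sup>2) * R"
      using assms R by simp
    ultimately show ?thesis unfolding boost_pi_char_poly_def by (simp add: algebra_simps)
  qed
  moreover have "R\<^sup>2 - KP * R - KI = R + KI * (R - 1)" by (simp add: R_def power2_eq_square algebra_simps)
  ultimately have "0 \<le> ?P R" using R assms(3) by (smt (verit) mult_nonneg_nonneg)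
  moreover have "?P 0 = - KI" by (simp add: boost_pi_char_poly_def)
  moreover have "continuous_on {0..R} ?P" unfolding boost_pi_char_poly_def by (intro continuous_intros)
  ultimately obtain \<mu> where "0 \<le> \<mu>" "?P \<mu> = 0" using IVT'[of ?P 0 0 R] R assms(3) by auto
  moreover from this have "\<mu> \<noteq> 0" using assms(3) by (auto simp: boost_pi_char_poly_def)
  ultimately show thesis by (intro that) auto
qed

locale boost_pi_unstable_root =
  fixes d2 ystar KP KI \<mu> :: real
  assumes d2: "0 < d2" and ystar: "0 < ystar" and KP: "0 \<le> KP" and KI: "0 < KI"
    and \<mu>: "0 < \<mu>" and root: "boost_pi_char_poly d2 ystar KP KI \<mu> = 0"
begin

abbreviation "J \<equiv> boost_pi_linearization d2 ystar KP KI"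

definition unstable_covector :: "real^3" where
  "unstable_covector = vector [1, \<mu> * ystar, ystar * (d2 * ystar\<^sup>2 * KI - KI / \<mu>)]"

definition eta_covector :: "real^3" where
  "eta_covector = vector [- 1 / ystar, d2 * (1 + ystar\<^sup>2 * KP) + \<mu>, - d2 * ystar\<^sup>2 * KI]"

definition zeta_covector :: "real^3" where
  "zeta_covector = vector [0, -1, - \<mu>]"

text \<open>With these facts \<open>algebra\<close> treats the reciprocals as inverses.\<close>

lemma reciprocals: "ystar * (1 / ystar) = 1" "ystar\<^sup>2 * (1 / ystar\<^sup>2) = 1" "\<mu> * (1 / \<mu>) = 1"
  using ystar \<mu> by simp_all

lemma unstable_covector_eigen: "unstable_covector \<bullet> J y = \<mu> * (unstable_covector \<bullet> y)"
  using root reciprocals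
  unfolding unstable_covector_def boost_pi_char_poly_def inner_vector_3 boost_pi_linearization_nth
  by algebra

lemma eta_covector_dot:
  "eta_covector \<bullet> J y
     = - (d2 * (1 + ystar\<^sup>2 * KP) + \<mu>) * (eta_covector \<bullet> y) - KI / \<mu> * (zeta_covector \<bullet> y)"
  using root reciprocals
  unfolding eta_covector_def zeta_covector_def boost_pi_char_poly_def inner_vector_3 boost_pi_linearization_nth
  by algebra

lemma zeta_covector_dot: "zeta_covector \<bullet> J y = eta_covector \<bullet> y"
  by (simp add: eta_covector_def zeta_covector_def inner_vector_3 boost_pi_linearization_nth distrib_right)

lemma covectors_injective:
  assumes "unstable_covector \<bullet> y = 0" "eta_covector \<bullet> y = 0" "zeta_covector \<bullet> y = 0"
  shows "y = 0"
proof -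
  let ?E = "d2 * (1 + ystar\<^sup>2 * KP)" and ?G = "d2 * ystar\<^sup>2 * KI"
  have y2: "y$2 = - \<mu> * y$3" using assms(3) by (simp add: zeta_covector_def inner_vector_3)
  have "y$1 + \<mu> * ystar * y$2 + ystar * (?G - KI / \<mu>) * y$3 = 0"
    using assms(1) by (simp add: unstable_covector_def inner_vector_3)
  moreover have "- y$1 + ystar * (?E + \<mu>) * y$2 - ystar * ?G * y$3 = 0"
    using assms(2) ystar unfolding eta_covector_def inner_vector_3 by (simp add: field_simps)
  moreover have "ystar * (((?E + 2 * \<mu>) * \<mu> + KI / \<mu>) * y$3)
      = - ((y$1 + \<mu> * ystar * y$2 + ystar * (?G - KI / \<mu>) * y$3)
           + (- y$1 + ystar * (?E + \<mu>) * y$2 - ystar * ?G * y$3))"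
    by (simp add: y2 algebra_simps)
  ultimately have "ystar * (((?E + 2 * \<mu>) * \<mu> + KI / \<mu>) * y$3) = 0" by simp
  moreover have "0 < (d2 * (1 + ystar\<^sup>2 * KP) + 2 * \<mu>) * \<mu> + KI / \<mu>"
  proof -
    have "0 \<le> d2 * (1 + ystar\<^sup>2 * KP)" using d2 KP by simp
    then show ?thesis using KI \<mu> by (simp add: add_pos_pos)
  qed
  ultimately have "y$3 = 0" using ystar by simp
  with y2 assms(2) ystar show "y = 0"
    by (simp add: vec_eq_iff forall_3 eta_covector_def inner_vector_3)
qed

definition lyapunov_form :: "real^3 \<Rightarrow> real" where
  "lyapunov_form y = (eta_covector \<bullet> y)\<^sup>2 + KI / \<mu> * (zeta_covector \<bullet> y)\<^sup>2"

definition lyapunov_form_deriv :: "real^3 \<Rightarrow> real^3 \<Rightarrow> real" where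
  "lyapunov_form_deriv y h = 2 * (eta_covector \<bullet> y) * (eta_covector \<bullet> h)
     + 2 * (KI / \<mu>) * (zeta_covector \<bullet> y) * (zeta_covector \<bullet> h)"

lemma lyapunov_form_has_derivative: "(lyapunov_form has_derivative lyapunov_form_deriv y) (at y)"
  unfolding lyapunov_form_def[abs_def] lyapunov_form_deriv_def
  using \<mu> by (auto intro!: derivative_eq_intros simp: algebra_simps)

lemma lyapunov_form_deriv_linear_flow:
  "lyapunov_form_deriv y (J y) = - 2 * (d2 * (1 + ystar\<^sup>2 * KP) + \<mu>) * (eta_covector \<bullet> y)\<^sup>2"
  by (simp add: lyapunov_form_deriv_def eta_covector_dot zeta_covector_dot algebra_simps power2_eq_square)

lemma lyapunov_form_decreasing: "lyapunov_form_deriv y (J y) \<le> 0"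
proof -
  have "0 \<le> d2 * (1 + ystar\<^sup>2 * KP) + \<mu>" using d2 KP \<mu> by simp
  then show ?thesis unfolding lyapunov_form_deriv_linear_flow by (intro mult_nonpos_nonneg) auto
qed

definition lyapunov_bound :: real where
  "lyapunov_bound = 2 * ((norm eta_covector)\<^sup>2 + KI / \<mu> * (norm zeta_covector)\<^sup>2)"

lemma lyapunov_form_deriv_bound: "\<bar>lyapunov_form_deriv y h\<bar> \<le> lyapunov_bound * norm y * norm h"
proof -
  have "\<bar>lyapunov_form_deriv y h\<bar> \<le> \<bar>2 * (eta_covector \<bullet> y) * (eta_covector \<bullet> h)\<bar>
      + \<bar>2 * (KI / \<mu>) * (zeta_covector \<bullet> y) * (zeta_covector \<bullet> h)\<bar>"
    unfolding lyapunov_form_deriv_def by (rule abs_triangle_ineq)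
  also have "\<dots> = 2 * \<bar>(eta_covector \<bullet> y) * (eta_covector \<bullet> h)\<bar>
      + 2 * (KI / \<mu>) * \<bar>(zeta_covector \<bullet> y) * (zeta_covector \<bullet> h)\<bar>"
    using KI \<mu> by (simp add: abs_mult)
  also have "\<dots> \<le> 2 * ((norm eta_covector)\<^sup>2 * (norm y * norm h))
      + 2 * (KI / \<mu>) * ((norm zeta_covector)\<^sup>2 * (norm y * norm h))"
    using KI \<mu> by (intro add_mono mult_left_mono abs_inner_mult_le) auto
  finally show ?thesis by (simp add: lyapunov_bound_def algebra_simps)
qed

lemma lyapunov_form_nonneg: "0 \<le> lyapunov_form y"
  using KI \<mu> by (simp add: lyapunov_form_def)

lemma lyapunov_form_bound: "lyapunov_form y \<le> lyapunov_bound * (norm y)\<^sup>2"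
proof -
  have "lyapunov_form y = lyapunov_form_deriv y y / 2"
    by (simp add: lyapunov_form_def lyapunov_form_deriv_def power2_eq_square)
  also have "\<dots> \<le> lyapunov_bound * (norm y)\<^sup>2 / 2"
    using lyapunov_form_deriv_bound[of y y] by (simp add: power2_eq_square mult.assoc)
  also have "\<dots> \<le> lyapunov_bound * (norm y)\<^sup>2"
    using KI \<mu> by (simp add: lyapunov_bound_def)
  finally show ?thesis .
qed

lemma covectors_coercive:
  obtains m where "0 < m" "\<And>y. m * (norm y)\<^sup>2 \<le> (unstable_covector \<bullet> y)\<^sup>2 + lyapunov_form y"
proof -
  define W :: "real^3 \<Rightarrow> real^3"
    where "W y = vector [unstable_covector \<bullet> y, eta_covector \<bullet> y, zeta_covector \<bullet> y]" for y
  have "linear W"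
    by (rule linearI) (simp_all add: W_def vec_eq_iff forall_3 inner_add_right)
  moreover have "inj W"
    using covectors_injective linear_injective_0[OF \<open>linear W\<close>] by (auto simp: W_def vec_eq_iff forall_3)
  ultimately obtain b where b: "0 < b" "\<And>y. b * norm y \<le> norm (W y)"
    using linear_inj_bounded_below_pos by blast
  define m where "m = b\<^sup>2 * min 1 (KI / \<mu>)"
  show thesis
  proof
    show "0 < m" using b KI \<mu> by (simp add: m_def)
    fix y :: "real^3"
    have "m * (norm y)\<^sup>2 = min 1 (KI / \<mu>) * (b * norm y)\<^sup>2" by (simp add: m_def power_mult_distrib)
    also have "\<dots> \<le> min 1 (KI / \<mu>) * (norm (W y))\<^sup>2"
      using b(1) b(2)[of y] KI \<mu> by (intro mult_left_mono power_mono) auto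
    also have "(norm (W y))\<^sup>2
        = (unstable_covector \<bullet> y)\<^sup>2 + (eta_covector \<bullet> y)\<^sup>2 + (zeta_covector \<bullet> y)\<^sup>2"
      by (simp only: power2_norm_eq_inner) (simp add: W_def inner_vector_3 power2_eq_square)
    also have "min 1 (KI / \<mu>) * \<dots> \<le> (unstable_covector \<bullet> y)\<^sup>2 + lyapunov_form y"
    proof -
      have "0 \<le> min 1 (KI / \<mu>)" using KI \<mu> by simp
      then have "min 1 (KI / \<mu>) * (unstable_covector \<bullet> y)\<^sup>2 \<le> (unstable_covector \<bullet> y)\<^sup>2"
        "min 1 (KI / \<mu>) * (eta_covector \<bullet> y)\<^sup>2 \<le> (eta_covector \<bullet> y)\<^sup>2"
        by (simp_all add: mult_left_le_one_le)
      moreover have "min 1 (KI / \<mu>) * (zeta_covector \<bullet> y)\<^sup>2 \<le> KI / \<mu> * (zeta_covector \<bullet> y)\<^sup>2"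
        by (rule mult_right_mono) auto
      ultimately
      show ?thesis unfolding lyapunov_form_def by (simp add: distrib_left)
    qed
    finally show "m * (norm y)\<^sup>2 \<le> (unstable_covector \<bullet> y)\<^sup>2 + lyapunov_form y" .
  qed
qed

lemma equilibrium_unstable: "\<not> lyapunov_stable (boost_pi_field d2 ystar KP KI u0) (boost_pi_equilibrium d2 ystar KI u0)"
proof -
  obtain m where m: "0 < m" "\<And>y. m * (norm y)\<^sup>2 \<le> (unstable_covector \<bullet> y)\<^sup>2 + lyapunov_form y"
    using covectors_coercive by blast
  have "bounded_linear (\<lambda>y :: real^3. KI * y$3 - KP * y$2)"
    by (intro bounded_linear_sub bounded_linear_const_mult bounded_linear_vec_nth)
  then have B: "bounded_bilinear (\<lambda>(y :: real^3) z. (KI * y$3 - KP * y$2) *\<^sub>R rot12 z)"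
    by (rule bounded_bilinear.comp[OF bounded_bilinear_scaleR _ bounded_linear_rot12])
  interpret unstable_linearization "boost_pi_field d2 ystar KP KI u0" J
    "\<lambda>y z. (KI * y$3 - KP * y$2) *\<^sub>R rot12 z" "boost_pi_equilibrium d2 ystar KI u0"
    "inner unstable_covector" lyapunov_form lyapunov_form_deriv "axis 1 1" \<mu> lyapunov_bound m
  proof (rule unstable_linearization.intro)
    show "boost_pi_field d2 ystar KP KI u0 (boost_pi_equilibrium d2 ystar KI u0 + y)
        = J y + (KI * y$3 - KP * y$2) *\<^sub>R rot12 y" for y
      using ystar KI by (intro boost_pi_field_expansion) auto
    show "unstable_covector \<bullet> axis 1 1 \<noteq> 0" by (simp add: inner_axis unstable_covector_def)
  qed (rule B \<mu> m bounded_linear_boost_pi_linearization bounded_linear_inner_right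
      unstable_covector_eigen lyapunov_form_has_derivative lyapunov_form_decreasing
      lyapunov_form_deriv_bound lyapunov_form_nonneg lyapunov_form_bound)+
  show ?thesis by (rule unstable)
qed

end

theorem proposition1:
  fixes d2 ystar KP KI u0 :: real
  assumes "d2 > 0" and "ystar > 0" and "KP \<ge> 0" and "KI > 0"
  shows "(\<exists>!p. equilibrium (boost_pi_field d2 ystar KP KI u0) p) \<and>
         (\<forall>p. equilibrium (boost_pi_field d2 ystar KP KI u0) p \<longrightarrow>
              \<not> lyapunov_stable (boost_pi_field d2 ystar KP KI u0) p)"
proof -
  have equilibrium_iff: "equilibrium (boost_pi_field d2 ystar KP KI u0) p
      \<longleftrightarrow> p = boost_pi_equilibrium d2 ystar KI u0" for p
    using assms by (intro boost_pi_equilibrium_iff) auto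
  obtain \<mu> where "0 < \<mu>" "boost_pi_char_poly d2 ystar KP KI \<mu> = 0"
    using boost_pi_char_poly_positive_root[of d2 KP KI ystar] assms by auto
  with assms interpret boost_pi_unstable_root d2 ystar KP KI \<mu>
    by unfold_locales
  show ?thesis using equilibrium_iff equilibrium_unstable by auto
qed

end
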